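(* Let $B \in M_{n_1}\otimes\cdots\otimes M_{n_p}$ (real) and let $P \subseteq \mathcal{P}([p])$ be non-empty. Then \[ \mu_{\min}(B) \ge W^{P,\mathbf{1}}_{\min}(B) \quad\text{and}\quad \mu_{\max}(B) \le W^{P,\mathbf{1}}_{\max}(B). \]
   Context: $M_n$ denotes real $n\times n$ matrices; $M_{n_1}\otimes\cdots\otimes M_{n_p}$ is identified with $M_{n_1\cdots n_p}$ via the Kronecker product. $[p] = \{1,\dots,p\}$ and $\mathcal{P}([p])$ is its power set. For $B = \sum_\ell X_{1,\ell}\otimes\cdots\otimes X_{p,\ell}$, the $j$-th partial transpose $\Gamma_j(B)$ replaces each $X_{j,\ell}$ by $X_{j,\ell}^T$ (a well-defined linear map); for $S\subseteq[p]$, $\Gamma_S$ is the composition of $\Gamma_j$ over $j\in S$ ($\Gamma_\emptyset$ is the identity). $\mu_{\min}(B)$ (resp. $\mu_{\max}(B)$) is the minimum (resp. maximum) of $(\mathbf{v_1}\otimes\cdots\otimes\mathbf{v_p})^T B(\mathbf{v_1}\otimes\cdots\otimes\mathbf{v_p})$ over unit vectors $\mathbf{v_j}\in\mathbb{R}^{n_j}$. The joint numerical range of $A_1,\dots,A_k\in M_N$ is $W(A_1,\dots,A_k) = \{(\mathbf{x}^*A_1\mathbf{x},\dots,\mathbf{x}^*A_k\mathbf{x}) : \mathbf{x}\in\mathbb{C}^N,\|\mathbf{x}\|=1\}$. For $P = \{S_1,\dots,S_k\}$, $W^{P,\mathbf{1}}(B) = \{c\in\mathbb{R} : (c,\dots,c)\in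 W(\Gamma_{S_1}(B),\dots,\Gamma_{S_k}(B))\}$, a nonempty compact set with minimum $W^{P,\mathbf{1}}_{\min}(B)$ and maximum $W^{P,\mathbf{1}}_{\max}(B)$. *)

theory Defs
  imports Complex_Main "HOL-Library.FuncSet"
begin

text \<open>The tensor factors are indexed 0-based by j < p (so [p] is {..<p}),
  factor j has dimension n j. A matrix B in M_{n_1} (x) ... (x) M_{n_p} = M_{n_1...n_p}
  is represented by its entries, indexed by pairs of multi-indices
  i = (i_0,...,i_{p-1}) with i_j < n j (extensional functions in PiE).\<close>

type_synonym tmat = "(nat \<Rightarrow> nat) \<Rightarrow> (nat \<Rightarrow> nat) \<Rightarrow> real"

definition mindex :: "nat \<Rightarrow> (nat \<Rightarrow> nat) \<Rightarrow> (nat \<Rightarrow> nat) set" where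
  "mindex p n = PiE {..<p} (\<lambda>j. {..<n j})"

text \<open>Partial transpose Gamma_S: transposes the tensor factors j in S, i.e. swaps the
  j-th row and column sub-indices for every j in S (this is the linear map sending
  X_1 (x) ... (x) X_p to the tensor with X_j replaced by X_j^T for j in S).\<close>
definition ptrans :: "nat set \<Rightarrow> tmat \<Rightarrow> tmat" where
  "ptrans S B = (\<lambda>i k. B (\<lambda>j. if j \<in> S then k j else i j) (\<lambda>j. if j \<in> S then i j else k j))"

definition prod_vec :: "nat \<Rightarrow> (nat \<Rightarrow> nat \<Rightarrow> real) \<Rightarrow> (nat \<Rightarrow> nat) \<Rightarrow> real" where
  "prod_vec p v i = (\<Prod>j<p. v j (i j))"

definition unit_prod_families :: "nat \<Rightarrow> (nat \<Rightarrow> nat) \<Rightarrow> (nat \<Rightarrow> nat \<Rightarrow> real) set" where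
  "unit_prod_families p n = {v. \<forall>j<p. (\<Sum>a<n j. (v j a)^2) = 1}"

definition prod_qform :: "nat \<Rightarrow> (nat \<Rightarrow> nat) \<Rightarrow> tmat \<Rightarrow> (nat \<Rightarrow> nat \<Rightarrow> real) \<Rightarrow> real" where
  "prod_qform p n B v = (\<Sum>i\<in>mindex p n. \<Sum>k\<in>mindex p n.
      prod_vec p v i * B i k * prod_vec p v k)"

definition mu_min :: "nat \<Rightarrow> (nat \<Rightarrow> nat) \<Rightarrow> tmat \<Rightarrow> real" where
  "mu_min p n B = Inf (prod_qform p n B ` unit_prod_families p n)"

definition mu_max :: "nat \<Rightarrow> (nat \<Rightarrow> nat) \<Rightarrow> tmat \<Rightarrow> real" where
  "mu_max p n B = Sup (prod_qform p n B ` unit_prod_families p n)"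

definition unit_cvecs :: "nat \<Rightarrow> (nat \<Rightarrow> nat) \<Rightarrow> ((nat \<Rightarrow> nat) \<Rightarrow> complex) set" where
  "unit_cvecs p n = {x. (\<Sum>i\<in>mindex p n. (cmod (x i))^2) = 1}"

definition cqform :: "nat \<Rightarrow> (nat \<Rightarrow> nat) \<Rightarrow> tmat \<Rightarrow> ((nat \<Rightarrow> nat) \<Rightarrow> complex) \<Rightarrow> complex" where
  "cqform p n A x = (\<Sum>i\<in>mindex p n. \<Sum>k\<in>mindex p n. cnj (x i) * complex_of_real (A i k) * x k)"

definition joint_numrange :: "nat \<Rightarrow> (nat \<Rightarrow> nat) \<Rightarrow> ('t \<Rightarrow> tmat) \<Rightarrow> 't set \<Rightarrow> ('t \<Rightarrow> complex) set" where
  "joint_numrange p n A I = {(\<lambda>t\<in>I. cqform p n (A t) x) | x. x \<in> unit_cvecs p n}"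

definition WP1 :: "nat \<Rightarrow> (nat \<Rightarrow> nat) \<Rightarrow> nat set set \<Rightarrow> tmat \<Rightarrow> real set" where
  "WP1 p n P B = {c. (\<lambda>S\<in>P. complex_of_real c) \<in> joint_numrange p n (\<lambda>S. ptrans S B) P}"

definition WP1_min :: "nat \<Rightarrow> (nat \<Rightarrow> nat) \<Rightarrow> nat set set \<Rightarrow> tmat \<Rightarrow> real" where
  "WP1_min p n P B = Inf (WP1 p n P B)"

definition WP1_max :: "nat \<Rightarrow> (nat \<Rightarrow> nat) \<Rightarrow> nat set set \<Rightarrow> tmat \<Rightarrow> real" where
  "WP1_max p n P B = Sup (WP1 p n P B)"

end

theory Submission
  imports Defs
begin

text \<open>A unit product vector \<open>v\<^sub>1 \<otimes> \<dots> \<otimes> v\<^sub>p\<close> is a real unit vector, and its quadratic form is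
  unchanged by every partial transpose, since \<open>\<Gamma>\<^sub>S\<close> only permutes the index pairs over which the
  form \<open>\<Sum> x\<^sub>i B\<^sub>i\<^sub>k x\<^sub>k\<close> is summed while fixing the weights \<open>x\<^sub>i x\<^sub>k\<close>. Hence every value of
  \<open>\<mu>(B)\<close> is a common value \<open>(c,\<dots>,c)\<close> of the joint numerical range, i.e. lies in \<open>W\<^sup>P\<^sup>,\<^sup>1(B)\<close>.
  Since this set is bounded as soon as \<open>P \<noteq> {}\<close>, the inequalities between infima and suprema
  follow.\<close>

lemma finite_mindex [simp]: "finite (mindex p n)"
  unfolding mindex_def by (rule finite_PiE) auto

lemma sum_prod_vec_squares:
  assumes "v \<in> unit_prod_families p n"
  shows "(\<Sum>i\<in>mindex p n. (prod_vec p v i)^2) = 1"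
proof -
  have "(\<Sum>i\<in>mindex p n. (prod_vec p v i)^2) = (\<Sum>i\<in>mindex p n. \<Prod>j<p. (v j (i j))^2)"
    unfolding prod_vec_def by (simp add: prod_power_distrib)
  also have "\<dots> = (\<Prod>j<p. \<Sum>a<n j. (v j a)^2)"
    unfolding mindex_def by (rule prod_sum_PiE[symmetric]) auto
  also have "\<dots> = 1"
    using assms unfolding unit_prod_families_def by simp
  finally show ?thesis .
qed

lemma unit_prod_families_nonempty:
  assumes "\<forall>j<p. n j \<ge> 1"
  shows "unit_prod_families p n \<noteq> {}"
proof -
  define e :: "nat \<Rightarrow> nat \<Rightarrow> real" where "e = (\<lambda>j a. if a = 0 then 1 else 0)"
  have "(\<Sum>a<n j. (e j a)^2) = 1" if "j < p" for j
  proof -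
    have "(\<Sum>a<n j. (e j a)^2) = (\<Sum>a<n j. if a = 0 then 1 else 0)"
      unfolding e_def by (intro sum.cong) auto
    then show ?thesis
      using assms that by (simp add: Suc_le_eq)
  qed
  then have "e \<in> unit_prod_families p n"
    unfolding unit_prod_families_def by blast
  then show ?thesis by blast
qed

lemma prod_qform_ptrans: "prod_qform p n (ptrans S B) v = prod_qform p n B v"
proof -
  define sw where "sw = (\<lambda>(i::nat\<Rightarrow>nat, k::nat\<Rightarrow>nat).
     ((\<lambda>j. if j \<in> S then k j else i j), (\<lambda>j. if j \<in> S then i j else k j)))"
  let ?M = "mindex p n \<times> mindex p n"
  let ?w = "\<lambda>x. prod_vec p v (fst x) * prod_vec p v (snd x)"
  have sw_closed: "sw x \<in> ?M" if "x \<in> ?M" for x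
    using that unfolding sw_def mindex_def
    by (auto simp: PiE_def Pi_def extensional_def split: prod.splits)
  have sw_involutive: "sw (sw x) = x" for x
    unfolding sw_def by (auto split: prod.splits)
  have weight_sw: "?w (sw x) = ?w x" for x
    unfolding sw_def prod_vec_def
    by (auto simp: prod.distrib[symmetric] split: prod.splits intro!: prod.cong)
  have "prod_qform p n (ptrans S B) v = (\<Sum>x\<in>?M. ?w x * B (fst (sw x)) (snd (sw x)))"
    unfolding prod_qform_def
    by (simp add: sum.cartesian_product ptrans_def sw_def mult_ac split_beta)
  also have "\<dots> = (\<Sum>x\<in>?M. ?w (sw x) * B (fst (sw x)) (snd (sw x)))"
    by (simp add: weight_sw)
  also have "\<dots> = (\<Sum>x\<in>?M. ?w x * B (fst x) (snd x))"
    by (rule sum.reindex_bij_witness[where i=sw and j=sw]) (auto simp: sw_involutive sw_closed)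
  also have "\<dots> = prod_qform p n B v"
    unfolding prod_qform_def by (simp add: sum.cartesian_product mult_ac split_beta)
  finally show ?thesis .
qed

lemma cqform_prod_vec:
  "cqform p n A (\<lambda>i. complex_of_real (prod_vec p v i)) = complex_of_real (prod_qform p n A v)"
  unfolding cqform_def prod_qform_def by simp

lemma norm_cqform_le:
  assumes "x \<in> unit_cvecs p n"
  shows "cmod (cqform p n A x) \<le> (\<Sum>i\<in>mindex p n. \<Sum>k\<in>mindex p n. \<bar>A i k\<bar>)"
proof -
  have entry_le_1: "cmod (x i) \<le> 1" if "i \<in> mindex p n" for i
  proof -
    have "(cmod (x i))^2 \<le> (\<Sum>i\<in>mindex p n. (cmod (x i))^2)"
      by (rule member_le_sum) (use that in auto)
    then show ?thesis
      using assms unfolding unit_cvecs_def by (simp add: power_le_one_iff)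
  qed
  have "cmod (cqform p n A x)
        \<le> (\<Sum>i\<in>mindex p n. \<Sum>k\<in>mindex p n. cmod (cnj (x i) * complex_of_real (A i k) * x k))"
    unfolding cqform_def by (rule order_trans[OF norm_sum sum_mono]) (rule norm_sum)
  also have "\<dots> \<le> (\<Sum>i\<in>mindex p n. \<Sum>k\<in>mindex p n. \<bar>A i k\<bar>)"
  proof (intro sum_mono)
    fix i k assume "i \<in> mindex p n" "k \<in> mindex p n"
    then have "cmod (x i) * \<bar>A i k\<bar> * cmod (x k) \<le> 1 * \<bar>A i k\<bar> * 1"
      using entry_le_1 by (intro mult_mono) auto
    then show "cmod (cnj (x i) * complex_of_real (A i k) * x k) \<le> \<bar>A i k\<bar>"
      by (simp add: norm_mult)
  qed
  finally show ?thesis .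
qed

lemma prod_qform_image_subset_WP1:
  "prod_qform p n B ` unit_prod_families p n \<subseteq> WP1 p n P B"
proof
  fix c assume "c \<in> prod_qform p n B ` unit_prod_families p n"
  then obtain v where v: "v \<in> unit_prod_families p n" and c: "c = prod_qform p n B v"
    by blast
  define x where "x = (\<lambda>i. complex_of_real (prod_vec p v i))"
  have "x \<in> unit_cvecs p n"
    using sum_prod_vec_squares[OF v] unfolding unit_cvecs_def x_def by simp
  moreover have "cqform p n (ptrans S B) x = complex_of_real c" for S
    unfolding x_def cqform_prod_vec prod_qform_ptrans c ..
  ultimately have "(\<lambda>S\<in>P. complex_of_real c) \<in> joint_numrange p n (\<lambda>S. ptrans S B) P"
    unfolding joint_numrange_def by (auto intro!: exI[of _ x])
  then show "c \<in> WP1 p n P B"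
    unfolding WP1_def by blast
qed

lemma abs_le_if_in_WP1:
  assumes "S \<in> P" and "c \<in> WP1 p n P B"
  shows "\<bar>c\<bar> \<le> (\<Sum>i\<in>mindex p n. \<Sum>k\<in>mindex p n. \<bar>ptrans S B i k\<bar>)"
proof -
  obtain x where x: "x \<in> unit_cvecs p n"
    and eq: "(\<lambda>T\<in>P. complex_of_real c) = (\<lambda>T\<in>P. cqform p n (ptrans T B) x)"
    using assms(2) unfolding WP1_def joint_numrange_def by blast
  have "complex_of_real c = cqform p n (ptrans S B) x"
    using fun_cong[OF eq, of S] assms(1) by simp
  then show ?thesis
    using norm_cqform_le[OF x] by (metis norm_of_real)
qed

lemma WP1_bounded:
  assumes "P \<noteq> {}"
  shows "bdd_below (WP1 p n P B)" and "bdd_above (WP1 p n P B)"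
proof -
  obtain S where "S \<in> P" using assms by blast
  then obtain M where M: "\<And>c. c \<in> WP1 p n P B \<Longrightarrow> - M \<le> c \<and> c \<le> M"
    using abs_le_if_in_WP1 by (metis abs_le_iff minus_le_iff)
  show "bdd_below (WP1 p n P B)"
    using M by (intro bdd_belowI[of _ "- M"]) blast
  show "bdd_above (WP1 p n P B)"
    using M by (intro bdd_aboveI[of _ M]) blast
qed

theorem theorem6p1:
  fixes p :: nat and n :: "nat \<Rightarrow> nat" and B :: tmat and P :: "nat set set"
  assumes "\<forall>j<p. n j \<ge> 1"
    and "P \<subseteq> Pow {..<p}"
    and "P \<noteq> {}"
  shows "mu_min p n B \<ge> WP1_min p n P B \<and> mu_max p n B \<le> WP1_max p n P B"
proof -
  have nonempty: "prod_qform p n B ` unit_prod_families p n \<noteq> {}"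
    using unit_prod_families_nonempty[OF assms(1)] by blast
  note subset = prod_qform_image_subset_WP1[of p n B P]
  show ?thesis
    unfolding mu_min_def mu_max_def WP1_min_def WP1_max_def
    using cInf_superset_mono[OF nonempty WP1_bounded(1)[OF assms(3)] subset]
      cSup_subset_mono[OF nonempty WP1_bounded(2)[OF assms(3)] subset]
    by simp
qed

end
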